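(* Let $G=(V,E)$ be a connected unit disk graph. Then the output of Heuristic CDOM on $G$ is a connected dominating set of $G$.
   Context: A graph $G$ is a unit disk graph if its vertices can be put in one-to-one correspondence with closed disks of radius $1$ in the plane so that two vertices are adjacent if and only if the corresponding disks intersect (tangent disks are considered to intersect). A dominating set is a set $V'\subseteq V$ such that every vertex of $V\setminus V'$ has a neighbor in $V'$; it is connected if the subgraph induced on $V'$ is connected. $G(U)$ denotes the subgraph induced on $U$. Heuristic CDOM: (1) pick an arbitrary vertex $v\in V$; (2) construct a breadth-first spanning tree $T$ of $G$ rooted at $v$, let $k$ be its depth and $S_i$ the set of vertices at level $i$ (distance $i$ from $v$ in $T$), $0\le i\le k$; (3) set $IS_0=\{v\}$, $NS_0=\emptyset$; (4) for $i=1,\dots,k$: let $DS_i$ be the set of vertices of $S_i$ adjacent to some vertex of $IS_{i-1}$; let $IS_i$ be any maximal independent set of $G(S_i\setminus DS_i)$; let $NS_i$ be the set of parents in $T$ of the vertices of $IS_i$; (5) output $\left(\bigcup_{i=0}^k IS_i\right)\cup\left(\bigcup_{i=0}^k NS_i\right)$. *)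

theory Defs
  imports "HOL-Analysis.Analysis"
begin

definition simple_graph :: "'a set \<Rightarrow> ('a \<Rightarrow> 'a \<Rightarrow> bool) \<Rightarrow> bool" where
  "simple_graph V E \<longleftrightarrow> finite V \<and>
     (\<forall>u w. E u w \<longrightarrow> u \<in> V \<and> w \<in> V \<and> u \<noteq> w \<and> E w u)"

definition unit_disk_graph :: "'a set \<Rightarrow> ('a \<Rightarrow> 'a \<Rightarrow> bool) \<Rightarrow> bool" where
  "unit_disk_graph V E \<longleftrightarrow> simple_graph V E \<and>
     (\<exists>c :: 'a \<Rightarrow> real ^ 2. inj_on c V \<and>
        (\<forall>u\<in>V. \<forall>w\<in>V. u \<noteq> w \<longrightarrow>
           (E u w \<longleftrightarrow> cball (c u) 1 \<inter> cball (c w) 1 \<noteq> {})))"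

definition walk_in :: "'a set \<Rightarrow> ('a \<Rightarrow> 'a \<Rightarrow> bool) \<Rightarrow> 'a \<Rightarrow> 'a \<Rightarrow> nat \<Rightarrow> bool" where
  "walk_in U E u w n \<longleftrightarrow> (\<exists>xs. length xs = Suc n \<and> hd xs = u \<and> last xs = w \<and>
      set xs \<subseteq> U \<and> (\<forall>i<n. E (xs ! i) (xs ! Suc i)))"

definition connected_set :: "('a \<Rightarrow> 'a \<Rightarrow> bool) \<Rightarrow> 'a set \<Rightarrow> bool" where
  "connected_set E U \<longleftrightarrow> (\<forall>u\<in>U. \<forall>w\<in>U. \<exists>n. walk_in U E u w n)"

definition connected_graph :: "'a set \<Rightarrow> ('a \<Rightarrow> 'a \<Rightarrow> bool) \<Rightarrow> bool" where
  "connected_graph V E \<longleftrightarrow> V \<noteq> {} \<and> connected_set E V"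

definition gdist :: "'a set \<Rightarrow> ('a \<Rightarrow> 'a \<Rightarrow> bool) \<Rightarrow> 'a \<Rightarrow> 'a \<Rightarrow> nat" where
  "gdist V E u w = (LEAST n. walk_in V E u w n)"

definition dominating_set :: "'a set \<Rightarrow> ('a \<Rightarrow> 'a \<Rightarrow> bool) \<Rightarrow> 'a set \<Rightarrow> bool" where
  "dominating_set V E D \<longleftrightarrow> D \<subseteq> V \<and> (\<forall>u\<in>V - D. \<exists>w\<in>D. E u w)"

definition connected_dominating_set :: "'a set \<Rightarrow> ('a \<Rightarrow> 'a \<Rightarrow> bool) \<Rightarrow> 'a set \<Rightarrow> bool" where
  "connected_dominating_set V E D \<longleftrightarrow> dominating_set V E D \<and> connected_set E D"

definition maximal_independent_set :: "('a \<Rightarrow> 'a \<Rightarrow> bool) \<Rightarrow> 'a set \<Rightarrow> 'a set \<Rightarrow> bool" where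
  "maximal_independent_set E W I \<longleftrightarrow> I \<subseteq> W \<and>
     (\<forall>x\<in>I. \<forall>y\<in>I. \<not> E x y) \<and> (\<forall>x\<in>W - I. \<exists>y\<in>I. E x y)"

definition bfs_tree :: "'a set \<Rightarrow> ('a \<Rightarrow> 'a \<Rightarrow> bool) \<Rightarrow> 'a \<Rightarrow> ('a \<Rightarrow> 'a) \<Rightarrow> bool" where
  "bfs_tree V E r par \<longleftrightarrow> r \<in> V \<and>
     (\<forall>u\<in>V - {r}. par u \<in> V \<and> E u (par u) \<and> Suc (gdist V E r (par u)) = gdist V E r u)"

definition level :: "'a set \<Rightarrow> ('a \<Rightarrow> 'a \<Rightarrow> bool) \<Rightarrow> 'a \<Rightarrow> nat \<Rightarrow> 'a set" where
  "level V E r i = {u \<in> V. gdist V E r u = i}"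

definition cdom_run :: "'a set \<Rightarrow> ('a \<Rightarrow> 'a \<Rightarrow> bool) \<Rightarrow> 'a \<Rightarrow> ('a \<Rightarrow> 'a) \<Rightarrow> (nat \<Rightarrow> 'a set) \<Rightarrow> bool" where
  "cdom_run V E r par IS \<longleftrightarrow> bfs_tree V E r par \<and> IS 0 = {r} \<and>
     (\<forall>i\<in>{1..Max (gdist V E r ` V)}.
        maximal_independent_set E
          (level V E r i - {u \<in> level V E r i. \<exists>w\<in>IS (i - 1). E u w}) (IS i))"

definition cdom_output :: "'a set \<Rightarrow> ('a \<Rightarrow> 'a \<Rightarrow> bool) \<Rightarrow> 'a \<Rightarrow> ('a \<Rightarrow> 'a) \<Rightarrow> (nat \<Rightarrow> 'a set) \<Rightarrow> 'a set" where
  "cdom_output V E r par IS =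
     (let k = Max (gdist V E r ` V) in
       (\<Union>i\<in>{0..k}. IS i) \<union> (\<Union>i\<in>{1..k}. par ` IS i))"

end

theory Submission
  imports Defs
begin

text \<open>Every vertex u on level i \<ge> 1 is in IS i or adjacent to IS (i - 1) \<union> IS i: either
u is in DS i, or maximality of IS i in level i minus DS i applies. For connectivity, the parent of a vertex of IS i lies on level i - 1, so it is the
root or, by the same dichotomy, equal or adjacent to a vertex of IS (i - 2) \<union> IS (i - 1);
induction on i links every chosen vertex, and hence every parent, to the root inside the
output.\<close>

definition adj_in :: "'a set \<Rightarrow> ('a \<Rightarrow> 'a \<Rightarrow> bool) \<Rightarrow> 'a \<Rightarrow> 'a \<Rightarrow> bool" where
  "adj_in U E x y \<longleftrightarrow> x \<in> U \<and> y \<in> U \<and> E x y"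

lemma walk_in_0_iff: "walk_in U E u w 0 \<longleftrightarrow> u = w \<and> u \<in> U"
proof
  assume "walk_in U E u w 0"
  then obtain x where "hd [x] = u" "last [x] = w" "set [x] \<subseteq> U"
    unfolding walk_in_def by (metis length_0_conv length_Suc_conv)
  then show "u = w \<and> u \<in> U" by simp
next
  assume "u = w \<and> u \<in> U"
  then show "walk_in U E u w 0"
    unfolding walk_in_def by (intro exI[of _ "[u]"]) auto
qed

lemma walk_in_snoc:
  assumes "walk_in U E u v n" "E v w" "w \<in> U"
  shows "walk_in U E u w (Suc n)"
proof -
  obtain xs where xs: "length xs = Suc n" "hd xs = u" "last xs = v" "set xs \<subseteq> U"
    "\<forall>i<n. E (xs ! i) (xs ! Suc i)"
    using assms(1) unfolding walk_in_def by blast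
  have "xs \<noteq> []"
    using xs(1) by auto
  then have "xs ! n = v"
    using xs(1,3) by (simp add: last_conv_nth)
  then have "\<forall>i<Suc n. E ((xs @ [w]) ! i) ((xs @ [w]) ! Suc i)"
    using xs(1,5) assms(2) by (auto simp: nth_append less_Suc_eq)
  with xs \<open>xs \<noteq> []\<close> assms(3) show ?thesis
    unfolding walk_in_def by (intro exI[of _ "xs @ [w]"]) auto
qed

lemma walk_in_if_rtranclp:
  assumes "(adj_in U E)\<^sup>*\<^sup>* u w" "u \<in> U"
  shows "\<exists>n. walk_in U E u w n"
  using assms(1)
proof (induction rule: rtranclp_induct)
  case base
  have "walk_in U E u u 0" using assms(2) by (simp add: walk_in_0_iff)
  then show ?case ..
next
  case (step v w)
  then obtain n where "walk_in U E u v n"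
    by blast
  moreover have "E v w" "w \<in> U"
    using step.hyps(2) by (simp_all add: adj_in_def)
  ultimately have "walk_in U E u w (Suc n)"
    by (rule walk_in_snoc)
  then show ?case ..
qed

lemma connected_set_if_reachable_from:
  assumes sym: "\<And>x y. E x y \<Longrightarrow> E y x"
    and reach: "\<And>u. u \<in> U \<Longrightarrow> (adj_in U E)\<^sup>*\<^sup>* r u"
  shows "connected_set E U"
  unfolding connected_set_def
proof (intro ballI)
  fix u w assume "u \<in> U" "w \<in> U"
  have "(adj_in U E)\<inverse>\<inverse> = adj_in U E"
    using sym by (auto simp: adj_in_def fun_eq_iff)
  then have "(adj_in U E)\<^sup>*\<^sup>* u r"
    using rtranclp_converseI[OF reach[OF \<open>u \<in> U\<close>]] by simp
  then have "(adj_in U E)\<^sup>*\<^sup>* u w"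
    using reach[OF \<open>w \<in> U\<close>] by (rule rtranclp_trans)
  then show "\<exists>n. walk_in U E u w n"
    using \<open>u \<in> U\<close> by (rule walk_in_if_rtranclp)
qed

lemma gdist_self: "r \<in> V \<Longrightarrow> gdist V E r r = 0"
  unfolding gdist_def by (simp add: walk_in_0_iff)

lemma gdist_eq_0D:
  assumes "walk_in V E r u n" "gdist V E r u = 0"
  shows "u = r"
  using LeastI[of "walk_in V E r u", OF assms(1)] assms(2)
  by (simp add: gdist_def walk_in_0_iff)

lemma bfs_tree_parent:
  assumes "bfs_tree V E r par" "u \<in> level V E r (Suc i)"
  shows "par u \<in> level V E r i \<and> E u (par u)"
proof -
  have u: "u \<in> V" "gdist V E r u = Suc i"
    using assms(2) by (simp_all add: level_def)
  moreover have "r \<in> V"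
    using assms(1) by (simp add: bfs_tree_def)
  ultimately have "u \<in> V - {r}"
    using gdist_self[of r V E] by force
  then have "par u \<in> V \<and> E u (par u) \<and> Suc (gdist V E r (par u)) = gdist V E r u"
    using assms(1) by (simp add: bfs_tree_def)
  then show ?thesis
    using u by (simp add: level_def)
qed

locale connected_cdom_run =
  fixes V :: "'a set" and E :: "'a \<Rightarrow> 'a \<Rightarrow> bool"
    and r :: 'a and par :: "'a \<Rightarrow> 'a" and IS :: "nat \<Rightarrow> 'a set"
  assumes simple: "simple_graph V E"
    and connected: "connected_graph V E"
    and run: "cdom_run V E r par IS"
begin

abbreviation depth :: nat where
  "depth \<equiv> Max (gdist V E r ` V)"

abbreviation D :: "'a set" where
  "D \<equiv> cdom_output V E r par IS"

lemma adj_sym: "E x y \<Longrightarrow> E y x"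
  using simple by (simp add: simple_graph_def)

lemma root_in_V: "r \<in> V"
  using run by (simp add: cdom_run_def bfs_tree_def)

lemma bfs_tree_par: "bfs_tree V E r par"
  using run by (simp add: cdom_run_def)

lemma IS_0: "IS 0 = {r}"
  using run by (simp add: cdom_run_def)

lemma IS_maximal:
  assumes "1 \<le> i" "i \<le> depth"
  shows "maximal_independent_set E
    (level V E r i - {u \<in> level V E r i. \<exists>w\<in>IS (i - 1). E u w}) (IS i)"
  using run assms by (simp add: cdom_run_def)

lemma level_0: "level V E r 0 = {r}"
proof -
  have "u = r" if "u \<in> V" "gdist V E r u = 0" for u
    using connected root_in_V that gdist_eq_0D
    by (metis connected_graph_def connected_set_def)
  then show ?thesis
    using root_in_V gdist_self by (auto simp: level_def)
qed

lemma level_le_depth: "u \<in> V \<Longrightarrow> gdist V E r u \<le> depth"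
  using simple by (simp add: simple_graph_def)

lemma IS_subset_level: "i \<le> depth \<Longrightarrow> IS i \<subseteq> level V E r i"
  using IS_maximal[of i] IS_0 level_0
  by (cases "i = 0") (auto simp: maximal_independent_set_def)

lemma IS_subset_output: "i \<le> depth \<Longrightarrow> IS i \<subseteq> D"
  by (auto simp: cdom_output_def)

lemma parent_in_output: "1 \<le> i \<Longrightarrow> i \<le> depth \<Longrightarrow> x \<in> IS i \<Longrightarrow> par x \<in> D"
  by (auto simp: cdom_output_def)

lemma parent_of_IS:
  assumes "1 \<le> i" "i \<le> depth" "x \<in> IS i"
  shows "par x \<in> level V E r (i - 1) \<and> E x (par x)"
proof -
  have "x \<in> level V E r (Suc (i - 1))"
    using IS_subset_level assms by auto
  then show ?thesis
    by (rule bfs_tree_parent[OF bfs_tree_par])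
qed

lemma output_cases:
  assumes "u \<in> D"
  obtains (chosen) i where "i \<le> depth" "u \<in> IS i"
    | (parent) i x where "1 \<le> i" "i \<le> depth" "x \<in> IS i" "u = par x"
  using assms by (auto simp: cdom_output_def)

lemma output_subset_V: "D \<subseteq> V"
proof
  fix u assume "u \<in> D"
  then show "u \<in> V"
  proof (cases rule: output_cases)
    case (chosen i)
    then show ?thesis using IS_subset_level by (auto simp: level_def)
  next
    case (parent i x)
    then show ?thesis using parent_of_IS by (auto simp: level_def)
  qed
qed

lemma level_dominated:
  assumes "1 \<le> i" "i \<le> depth" "u \<in> level V E r i"
  shows "u \<in> IS i \<or> (\<exists>w \<in> IS (i - 1) \<union> IS i. E u w)"
  using IS_maximal[OF assms(1,2)] assms(3)
  unfolding maximal_independent_set_def by blast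

lemma output_dominating: "dominating_set V E D"
  unfolding dominating_set_def
proof (intro conjI ballI output_subset_V)
  fix u assume u: "u \<in> V - D"
  define i where "i = gdist V E r u"
  have "u \<noteq> r"
    using u IS_subset_output[of 0] IS_0 by auto
  then have "1 \<le> i" "i \<le> depth" "u \<in> level V E r i"
    using u level_0 level_le_depth by (auto simp: i_def level_def)
  then show "\<exists>w\<in>D. E u w"
    using level_dominated u IS_subset_output[of i] IS_subset_output[of "i - 1"] by fastforce
qed

lemma IS_reachable: "i \<le> depth \<Longrightarrow> x \<in> IS i \<Longrightarrow> (adj_in D E)\<^sup>*\<^sup>* r x"
proof (induction i arbitrary: x rule: less_induct)
  case (less i)
  show ?case
  proof (cases "i = 0")
    case True
    then show ?thesis using less.prems IS_0 by simp
  next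
    case False
    let ?p = "par x"
    have p: "?p \<in> level V E r (i - 1)" "E x ?p"
      using parent_of_IS[of i x] False less.prems by auto
    have "x \<in> D" "?p \<in> D"
      using IS_subset_output[of i] parent_in_output[of i x] False less.prems by auto
    have "(adj_in D E)\<^sup>*\<^sup>* r ?p"
    proof (cases "i = 1")
      case True
      then show ?thesis using p(1) level_0 by simp
    next
      case False
      then have "1 \<le> i - 1" "i - 1 \<le> depth"
        using \<open>i \<noteq> 0\<close> less.prems by auto
      then have dom: "?p \<in> IS (i - 1) \<or> (\<exists>w \<in> IS (i - 1 - 1) \<union> IS (i - 1). E ?p w)"
        using p(1) by (rule level_dominated)
      have "i - 1 < i" "i - 1 - 1 < i"
        using \<open>i \<noteq> 0\<close> by auto
      then obtain j w where "j < i" "w \<in> IS j" "w = ?p \<or> E w ?p"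
        using dom adj_sym by blast
      moreover have "(adj_in D E)\<^sup>*\<^sup>* r w"
        using less.IH \<open>j < i\<close> \<open>w \<in> IS j\<close> less.prems by simp
      moreover have "w \<in> D"
        using IS_subset_output[of j] \<open>j < i\<close> \<open>w \<in> IS j\<close> less.prems by auto
      ultimately show ?thesis
        using \<open>?p \<in> D\<close> by (auto simp: adj_in_def intro: rtranclp.rtrancl_into_rtrancl)
    qed
    moreover have "adj_in D E ?p x"
      using p(2) adj_sym \<open>x \<in> D\<close> \<open>?p \<in> D\<close> by (simp add: adj_in_def)
    ultimately show ?thesis by (rule rtranclp.rtrancl_into_rtrancl)
  qed
qed

lemma output_reachable:
  assumes "u \<in> D"
  shows "(adj_in D E)\<^sup>*\<^sup>* r u"
  using assms
proof (cases rule: output_cases)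
  case (chosen i)
  then show ?thesis by (rule IS_reachable)
next
  case (parent i x)
  have "(adj_in D E)\<^sup>*\<^sup>* r x"
    using parent(2,3) by (rule IS_reachable)
  moreover have "adj_in D E x u"
    using parent parent_of_IS IS_subset_output assms by (auto simp: adj_in_def)
  ultimately show ?thesis
    by (rule rtranclp.rtrancl_into_rtrancl)
qed

lemma output_connected_dominating: "connected_dominating_set V E D"
  unfolding connected_dominating_set_def
  using output_dominating connected_set_if_reachable_from[OF adj_sym output_reachable] by blast

end

theorem lemma4p4:
  fixes V :: "'a set" and E :: "'a \<Rightarrow> 'a \<Rightarrow> bool"
    and r :: 'a and par :: "'a \<Rightarrow> 'a" and IS :: "nat \<Rightarrow> 'a set"
  assumes "unit_disk_graph V E"
    and "connected_graph V E"
    and "r \<in> V"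
    and "cdom_run V E r par IS"
  shows "connected_dominating_set V E (cdom_output V E r par IS)"
proof -
  have "simple_graph V E"
    using assms(1) unfolding unit_disk_graph_def by blast
  then interpret connected_cdom_run V E r par IS
    using assms(2,4) by unfold_locales
  show ?thesis by (rule output_connected_dominating)
qed

end
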